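(* Under the standing assumptions below, for all $c,d\in I$ and $k\in\{0,\dots,n\}$: if $c\prec d$ but $c\not\prec_k d$, then $\mathrm{var}(c)\cap\mathrm{var}(d)\cap X_k=\emptyset$.
   Context: Standing assumptions: $I$ is a finite set of weighted constraints with default values on a finite domain $D$ such that distinct constraints have distinct variable sets, $\mathcal H(I)=(\mathrm{var}(I),\{\mathrm{var}(c)\mid c\in I\})$ is $\beta$-acyclic, and $(x_1,\dots,x_n)$ is a $\beta$-elimination order of $\mathcal H(I)$ (an enumeration of $\mathrm{var}(I)$ such that for each $k$, $x_{k+1}$ is a nest point—the edges containing it are totally ordered by inclusion—of the hypergraph with vertices $\mathrm{var}(I)\setminus X_k$ and edges $\{e\setminus X_k\}\setminus\{\emptyset\}$). $X_k=\{x_1,\dots,x_k\}$. For $c,d\in I$: $c\prec d$ iff there is $k$ with $\mathrm{var}(c)\setminus X_k\subsetneq\mathrm{var}(d)\setminus X_k$; $c\preceq d$ iff $c\prec d$ or $c=d$. Relations $\prec_k$ are defined inductively: $\prec_0=\emptyset$; $c\prec_{k+1}d$ iff $c\prec_k d$ or there is $e\in I$ with $c\preceq_k e\prec d$ and $x_{k+1}\in\mathrm{var}(d)\cap\mathrm{var}(e)$; here $c\preceq_k d$ iff $c=d$ or $c\prec_k d$. *)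

theory Defs
  imports Main
begin

text \<open>Constraints are abstracted: a constraint of type 'c has a scope (variable set)
  given by the function var.  The lemma only depends on the scopes.\<close>

definition hyp_vertices :: "('c \<Rightarrow> 'v set) \<Rightarrow> 'c set \<Rightarrow> 'v set" where
  "hyp_vertices var I = (\<Union>c\<in>I. var c)"

definition hyp_edges :: "('c \<Rightarrow> 'v set) \<Rightarrow> 'c set \<Rightarrow> 'v set set" where
  "hyp_edges var I = var ` I"

definition nest_point :: "'v set set \<Rightarrow> 'v \<Rightarrow> bool" where
  "nest_point E x \<longleftrightarrow>
     (\<forall>e\<in>E. \<forall>f\<in>E. x \<in> e \<longrightarrow> x \<in> f \<longrightarrow> e \<subseteq> f \<or> f \<subseteq> e)"

definition beta_elim_order :: "'v set \<Rightarrow> 'v set set \<Rightarrow> 'v list \<Rightarrow> bool" where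
  "beta_elim_order V E xs \<longleftrightarrow>
     distinct xs \<and> set xs = V \<and>
     (\<forall>k < length xs.
        xs ! k \<in> V - set (take k xs) \<and>
        nest_point ((\<lambda>e. e - set (take k xs)) ` E - {{}}) (xs ! k))"

definition beta_acyclic :: "'v set \<Rightarrow> 'v set set \<Rightarrow> bool" where
  "beta_acyclic V E \<longleftrightarrow> (\<exists>xs. beta_elim_order V E xs)"

text \<open>X_k = {x_1,...,x_k} = set (take k xs).\<close>
definition prec :: "('c \<Rightarrow> 'v set) \<Rightarrow> 'v list \<Rightarrow> 'c \<Rightarrow> 'c \<Rightarrow> bool" where
  "prec var xs c d \<longleftrightarrow>
     (\<exists>k \<le> length xs. var c - set (take k xs) \<subset> var d - set (take k xs))"

text \<open>The relations prec_k; x_(k+1) is xs ! k.\<close>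
primrec preck :: "'c set \<Rightarrow> ('c \<Rightarrow> 'v set) \<Rightarrow> 'v list \<Rightarrow> nat \<Rightarrow> 'c \<Rightarrow> 'c \<Rightarrow> bool" where
  "preck I var xs 0 c d = False"
| "preck I var xs (Suc k) c d =
     (preck I var xs k c d \<or>
      (\<exists>e\<in>I. (c = e \<or> preck I var xs k c e) \<and> prec var xs e d \<and>
              xs ! k \<in> var d \<inter> var e))"

end

theory Submission
  imports Defs
begin

text \<open>If some eliminated variable x_(j+1) with j < k lies in both scopes, then taking e = c in
  the definition of prec_(j+1) already gives c prec_(j+1) d, and the relations prec_k only grow
  with k.\<close>

lemma preck_mono:
  assumes "j \<le> k" and "preck I var xs j c d"
  shows "preck I var xs k c d"
  using assms by (induction k rule: dec_induct) auto

lemma preck_Suc_if_shared_var: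
  assumes "c \<in> I" and "prec var xs c d" and "xs ! j \<in> var c \<inter> var d"
  shows "preck I var xs (Suc j) c d"
  using assms by auto

theorem lemma5:
  fixes I :: "'c set" and var :: "'c \<Rightarrow> 'v set" and xs :: "'v list"
    and c d :: 'c and k :: nat
  assumes "finite I"
    and "\<forall>c\<in>I. finite (var c)"
    and "inj_on var I"
    and "beta_acyclic (hyp_vertices var I) (hyp_edges var I)"
    and "beta_elim_order (hyp_vertices var I) (hyp_edges var I) xs"
    and "c \<in> I" and "d \<in> I"
    and "k \<le> length xs"
    and "prec var xs c d"
    and "\<not> preck I var xs k c d"
  shows "var c \<inter> var d \<inter> set (take k xs) = {}"
proof (rule ccontr)
  assume "var c \<inter> var d \<inter> set (take k xs) \<noteq> {}"
  then obtain j where "j < k" and shared: "xs ! j \<in> var c \<inter> var d"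
    by (auto simp: in_set_conv_nth) blast
  have "preck I var xs (Suc j) c d"
    using preck_Suc_if_shared_var[OF \<open>c \<in> I\<close> \<open>prec var xs c d\<close> shared] .
  moreover have "Suc j \<le> k"
    using \<open>j < k\<close> by simp
  ultimately have "preck I var xs k c d"
    by (rule preck_mono[rotated])
  with \<open>\<not> preck I var xs k c d\<close> show False ..
qed

end
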